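(* Let $G=(V,E)$ be a graph with $|V|=n$, let $k\ge1$, and suppose $N_1,\dots,N_r$ is an $r$-partition of $G$. Then $$M^G_{k,n}\le \sum_{i=1}^r M^C_{k,|N_i|}+r .$$ In particular, $M^G_{k,n}=O(rk\log(n/k))+r$.
   Context: Let $G=(V,E)$ be a simple undirected graph. A set $S\subseteq V$ is a hub for $U\subseteq V$ if the induced subgraph $G_S$ is connected and every $u\in U$ has a neighbor $s\in S$, i.e. $\{u,s\}\in E$. Pairwise disjoint sets $N_1,\dots,N_r\subseteq V$ form an $r$-partition of $G$ if $\bigcup_{i=1}^r N_i=V$ and, for every $i$, $V\setminus N_i$ is a hub for $N_i$. A measurement matrix for $G$ is a $0$-$1$ matrix with columns indexed by $V$ in which every nonzero row has a support that induces a connected subgraph of $G$. A vector is $k$-sparse if it has at most $k$ nonzero entries. $A$ identifies all $k$-sparse vectors if $Ax_1\ne Ax_2$ for every two distinct $k$-sparse $x_1,x_2\in\mathbb{R}^n$. $M^G_{k,n}$ is the minimum number of rows of a measurement matrix for $G$ that identifies all $k$-sparse vectors. $M^C_{k,N}$ is the minimum number of rows of an arbitrary $0$-$1$ matrix with $N$ columns that identifies all $k$-sparse vectors in $\mathbb{R}^N$; it satisfies $M^C_{k,N}=O(k\log(N/k))$. *)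

theory Defs
  imports Complex_Main
begin

definition simple_graph :: "'a set \<Rightarrow> 'a set set \<Rightarrow> bool" where
  "simple_graph V E \<longleftrightarrow> finite V \<and> (\<forall>e\<in>E. e \<subseteq> V \<and> card e = 2)"

definition induced_connected :: "'a set set \<Rightarrow> 'a set \<Rightarrow> bool" where
  "induced_connected E S \<longleftrightarrow>
     (\<forall>u\<in>S. \<forall>v\<in>S. (u, v) \<in> {(x, y). x \<in> S \<and> y \<in> S \<and> {x, y} \<in> E}\<^sup>*)"

definition is_hub :: "'a set set \<Rightarrow> 'a set \<Rightarrow> 'a set \<Rightarrow> bool" where
  "is_hub E S U \<longleftrightarrow> induced_connected E S \<and> (\<forall>u\<in>U. \<exists>s\<in>S. {u, s} \<in> E)"

definition is_r_partition :: "'a set \<Rightarrow> 'a set set \<Rightarrow> nat \<Rightarrow> (nat \<Rightarrow> 'a set) \<Rightarrow> bool" where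
  "is_r_partition V E r N \<longleftrightarrow>
     (\<forall>i<r. \<forall>j<r. i \<noteq> j \<longrightarrow> N i \<inter> N j = {}) \<and>
     (\<Union>i<r. N i) = V \<and>
     (\<forall>i<r. is_hub E (V - N i) (N i))"

text \<open>A 0-1 matrix with columns indexed by a set C is represented by the list of the
  supports of its rows; the product with a vector x is the list of row sums.\<close>
definition mat_apply :: "'a set list \<Rightarrow> ('a \<Rightarrow> real) \<Rightarrow> real list" where
  "mat_apply A x = map (\<lambda>R. \<Sum>v\<in>R. x v) A"

definition sparse_vec :: "'a set \<Rightarrow> nat \<Rightarrow> ('a \<Rightarrow> real) \<Rightarrow> bool" where
  "sparse_vec C k x \<longleftrightarrow> (\<forall>v. v \<notin> C \<longrightarrow> x v = 0) \<and> card {v\<in>C. x v \<noteq> 0} \<le> k"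

definition identifies :: "'a set \<Rightarrow> nat \<Rightarrow> 'a set list \<Rightarrow> bool" where
  "identifies C k A \<longleftrightarrow>
     (\<forall>x1 x2. sparse_vec C k x1 \<longrightarrow> sparse_vec C k x2 \<longrightarrow> x1 \<noteq> x2 \<longrightarrow>
        mat_apply A x1 \<noteq> mat_apply A x2)"

definition measurement_matrix :: "'a set \<Rightarrow> 'a set set \<Rightarrow> 'a set list \<Rightarrow> bool" where
  "measurement_matrix V E A \<longleftrightarrow>
     (\<forall>R\<in>set A. R \<subseteq> V \<and> (R \<noteq> {} \<longrightarrow> induced_connected E R))"

definition MG :: "'a set \<Rightarrow> 'a set set \<Rightarrow> nat \<Rightarrow> nat" where
  "MG V E k = (LEAST m. \<exists>A. length A = m \<and> measurement_matrix V E A \<and> identifies V k A)"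

definition MC :: "nat \<Rightarrow> nat \<Rightarrow> nat" where
  "MC k N = (LEAST m. \<exists>A. length A = m \<and> (\<forall>R\<in>set A. R \<subseteq> {..<N}) \<and> identifies {..<N} k A)"

end

theory Submission
  imports Defs
begin

(* Fix block i of the r-partition, write S = V - N_i (a hub for N_i) and let A_i be an
   optimal 0-1 matrix with MC k |N_i| rows identifying k-sparse vectors of R^{N_i},
   its columns transported to N_i along a bijection f : {..<|N_i|} -> N_i.
   Replace every row Q of A_i by the row f`Q \<union> S and append the single row S.
   Because S is a hub for N_i, every such row induces a connected subgraph, and the
   measurement on S can be subtracted from each measurement f`Q \<union> S, recovering the
   measurements of A_i applied to the restriction of x to N_i; since that restriction
   is again k-sparse, it is determined.  Stacking the r blocks gives a measurement
   matrix for G with sum_i MC k |N_i| + r rows identifying all k-sparse vectors, as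
   the blocks cover V. *)

text \<open>If S is a hub for U, then adjoining any part of U to S keeps the induced
  subgraph connected: every new vertex is adjacent to S, and S itself is connected.\<close>
lemma hub_extension_connected:
  assumes "is_hub E S U" "U' \<subseteq> U"
  shows "induced_connected E (U' \<union> S)"
proof -
  let ?T = "U' \<union> S"
  let ?R = "{(x, y). x \<in> ?T \<and> y \<in> ?T \<and> {x, y} \<in> E}"
  let ?RS = "{(x, y). x \<in> S \<and> y \<in> S \<and> {x, y} \<in> E}"
  have S_paths: "(u, v) \<in> ?R\<^sup>*" if "u \<in> S" "v \<in> S" for u v
  proof -
    have "(u, v) \<in> ?RS\<^sup>*"
      using assms(1) that unfolding is_hub_def induced_connected_def by blast
    moreover have "?RS\<^sup>* \<subseteq> ?R\<^sup>*" by (rule rtrancl_mono) auto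
    ultimately show ?thesis by blast
  qed
  have near_S: "\<exists>s\<in>S. (w, s) \<in> ?R\<^sup>* \<and> (s, w) \<in> ?R\<^sup>*" if "w \<in> ?T" for w
  proof (cases "w \<in> S")
    case False
    then have "w \<in> U" using that assms(2) by blast
    then obtain s where s: "s \<in> S" "{w, s} \<in> E" using assms(1) unfolding is_hub_def by blast
    then have "(w, s) \<in> ?R" "(s, w) \<in> ?R" using that by (auto simp: insert_commute)
    then show ?thesis using s by blast
  qed blast
  show ?thesis unfolding induced_connected_def
  proof (intro ballI)
    fix u v assume "u \<in> ?T" "v \<in> ?T"
    then obtain su sv where "su \<in> S" "sv \<in> S" "(u, su) \<in> ?R\<^sup>*" "(sv, v) \<in> ?R\<^sup>*"
      using near_S by blast
    then show "(u, v) \<in> ?R\<^sup>*" using S_paths by (meson rtrancl_trans)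
  qed
qed

lemma mat_apply_eq_iff:
  "mat_apply A x1 = mat_apply A x2 \<longleftrightarrow> (\<forall>R\<in>set A. (\<Sum>v\<in>R. x1 v) = (\<Sum>v\<in>R. x2 v))"
  unfolding mat_apply_def by (simp add: map_eq_conv)

text \<open>The minimum defining MC is attained: the identity matrix identifies every vector,
  so the set of admissible row numbers is nonempty.\<close>
lemma MC_attained:
  "\<exists>A. length A = MC k c \<and> (\<forall>R\<in>set A. R \<subseteq> {..<c}) \<and> identifies {..<c} k A"
proof -
  let ?I = "map (\<lambda>j. {j}) [0..<c]"
  have "identifies {..<c} k ?I"
    unfolding identifies_def
  proof (intro allI impI)
    fix x1 x2 :: "nat \<Rightarrow> real"
    assume "sparse_vec {..<c} k x1" "sparse_vec {..<c} k x2" "x1 \<noteq> x2"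
    then obtain v where v: "x1 v \<noteq> x2 v" by auto
    then have "v < c" using \<open>sparse_vec {..<c} k x1\<close> \<open>sparse_vec {..<c} k x2\<close>
      unfolding sparse_vec_def by fastforce
    then have "{v} \<in> set ?I" by simp
    then show "mat_apply ?I x1 \<noteq> mat_apply ?I x2" using v unfolding mat_apply_eq_iff by force
  qed
  then have "\<exists>m A. length A = m \<and> (\<forall>R\<in>set A. R \<subseteq> {..<c}) \<and> identifies {..<c} k A"
    by (intro exI[of _ c] exI[of _ ?I]) auto
  from LeastI_ex[OF this] show ?thesis unfolding MC_def by blast
qed

definition determines :: "'a set \<Rightarrow> nat \<Rightarrow> 'a set list \<Rightarrow> 'a set \<Rightarrow> bool" where
  "determines V k B N \<longleftrightarrow> (\<forall>x1 x2. sparse_vec V k x1 \<longrightarrow> sparse_vec V k x2 \<longrightarrow>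
     mat_apply B x1 = mat_apply B x2 \<longrightarrow> (\<forall>v\<in>N. x1 v = x2 v))"

lemma MG_le:
  assumes "measurement_matrix V E A" "identifies V k A"
  shows "MG V E k \<le> length A"
  unfolding MG_def by (rule Least_le) (use assms in blast)

definition block_rows :: "(nat \<Rightarrow> 'a) \<Rightarrow> nat set list \<Rightarrow> 'a set \<Rightarrow> 'a set list" where
  "block_rows f A S = map (\<lambda>Q. f ` Q \<union> S) A @ [S]"

definition restrict_block :: "(nat \<Rightarrow> 'a) \<Rightarrow> nat \<Rightarrow> ('a \<Rightarrow> real) \<Rightarrow> nat \<Rightarrow> real" where
  "restrict_block f c x t = (if t < c then x (f t) else 0)"

lemma length_block_rows: "length (block_rows f A S) = length A + 1"
  by (simp add: block_rows_def)

lemma block_rows_measurement: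
  assumes "is_hub E S N" "S \<subseteq> V" "N \<subseteq> V" "f ` {..<c} \<subseteq> N"
    and "\<forall>Q\<in>set A. Q \<subseteq> {..<c}"
  shows "measurement_matrix V E (block_rows f A S)"
  unfolding measurement_matrix_def
proof
  fix R assume "R \<in> set (block_rows f A S)"
  then consider "R = S" | Q where "Q \<in> set A" "R = f ` Q \<union> S"
    unfolding block_rows_def by auto
  then obtain Q where "R = Q \<union> S" "Q \<subseteq> N"
    using assms(4,5) by (metis Un_empty_left empty_subsetI image_mono order_trans)
  then show "R \<subseteq> V \<and> (R \<noteq> {} \<longrightarrow> induced_connected E R)"
    using hub_extension_connected[OF assms(1)] assms(2,3) by blast
qed

lemma sparse_restrict_block:
  assumes "inj_on f {..<c}" "finite V" "sparse_vec V k x"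
  shows "sparse_vec {..<c} k (restrict_block f c x)"
  unfolding sparse_vec_def
proof
  let ?Z = "{t \<in> {..<c}. restrict_block f c x t \<noteq> 0}"
  show "\<forall>t. t \<notin> {..<c} \<longrightarrow> restrict_block f c x t = 0" by (simp add: restrict_block_def)
  have "card ?Z = card (f ` ?Z)"
    by (rule card_image[symmetric]) (rule inj_on_subset[OF assms(1)], blast)
  also have "\<dots> \<le> card {v \<in> V. x v \<noteq> 0}"
    using assms(2,3) by (intro card_mono) (auto simp: sparse_vec_def restrict_block_def)
  also have "\<dots> \<le> k" using assms(3) unfolding sparse_vec_def by blast
  finally show "card ?Z \<le> k" .
qed

lemma lifted_row_sum:
  assumes "inj_on f {..<c}" "Q \<subseteq> {..<c}" "finite S" "f ` {..<c} \<inter> S = {}"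
  shows "(\<Sum>u\<in>f ` Q \<union> S. x u) = (\<Sum>t\<in>Q. restrict_block f c x t) + (\<Sum>u\<in>S. x u)"
proof -
  have "finite Q" using assms(2) finite_subset by blast
  then have "(\<Sum>u\<in>f ` Q \<union> S. x u) = (\<Sum>u\<in>f ` Q. x u) + (\<Sum>u\<in>S. x u)"
    using assms(2-4) by (intro sum.union_disjoint) auto
  also have "(\<Sum>u\<in>f ` Q. x u) = (\<Sum>t\<in>Q. x (f t))"
    by (rule sum.reindex_cong[OF inj_on_subset[OF assms(1,2)]]) auto
  also have "\<dots> = (\<Sum>t\<in>Q. restrict_block f c x t)"
    using assms(2) by (intro sum.cong) (auto simp: restrict_block_def)
  finally show ?thesis .
qed

lemma block_rows_decode:
  assumes f: "inj_on f {..<c}" and A: "\<forall>Q\<in>set A. Q \<subseteq> {..<c}" "identifies {..<c} k A"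
    and S: "finite S" "f ` {..<c} \<inter> S = {}" and V: "finite V"
    and x: "sparse_vec V k x1" "sparse_vec V k x2"
    and eq: "mat_apply (block_rows f A S) x1 = mat_apply (block_rows f A S) x2"
  shows "\<forall>t<c. x1 (f t) = x2 (f t)"
proof -
  have rows: "(\<Sum>v\<in>R. x1 v) = (\<Sum>v\<in>R. x2 v)" if "R \<in> set (block_rows f A S)" for R
    using eq that by (simp add: mat_apply_eq_iff)
  have "mat_apply A (restrict_block f c x1) = mat_apply A (restrict_block f c x2)"
    unfolding mat_apply_eq_iff
  proof
    fix Q assume Q: "Q \<in> set A"
    have "f ` Q \<union> S \<in> set (block_rows f A S)" "S \<in> set (block_rows f A S)"
      using Q by (auto simp: block_rows_def)
    moreover have "Q \<subseteq> {..<c}" using A(1) Q by blast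
    ultimately show "(\<Sum>t\<in>Q. restrict_block f c x1 t) = (\<Sum>t\<in>Q. restrict_block f c x2 t)"
      using rows lifted_row_sum[OF f _ S] by (metis add_right_cancel)
  qed
  then have "restrict_block f c x1 = restrict_block f c x2"
    using A(2) sparse_restrict_block[OF f V] x unfolding identifies_def by blast
  then show ?thesis unfolding restrict_block_def by (metis (full_types))
qed

lemma block_exists:
  assumes V: "finite V" and N: "N \<subseteq> V" and hub: "is_hub E (V - N) N"
  shows "\<exists>B. length B = MC k (card N) + 1 \<and> measurement_matrix V E B \<and> determines V k B N"
proof -
  obtain f where f: "bij_betw f {..<card N} N"
    using ex_bij_betw_nat_finite[of N] V N by (metis atLeast0LessThan finite_subset)
  then have f_inj: "inj_on f {..<card N}" and f_image: "f ` {..<card N} = N"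
    unfolding bij_betw_def by auto
  obtain A where A: "length A = MC k (card N)" "\<forall>Q\<in>set A. Q \<subseteq> {..<card N}"
    "identifies {..<card N} k A"
    using MC_attained by blast
  let ?B = "block_rows f A (V - N)"
  have "measurement_matrix V E ?B"
    using block_rows_measurement[OF hub _ N _ A(2)] f_image by blast
  moreover have "determines V k ?B N"
    unfolding determines_def
  proof (intro allI impI)
    fix x1 x2 assume "sparse_vec V k x1" "sparse_vec V k x2" "mat_apply ?B x1 = mat_apply ?B x2"
    moreover have "finite (V - N)" "f ` {..<card N} \<inter> (V - N) = {}" using V f_image by auto
    ultimately have "\<forall>t<card N. x1 (f t) = x2 (f t)"
      using block_rows_decode[OF f_inj A(2,3) _ _ V] by blast
    then show "\<forall>v\<in>N. x1 v = x2 v" using f_image by (metis imageE lessThan_iff)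
  qed
  ultimately show ?thesis using A(1) by (intro exI[of _ ?B]) (auto simp: length_block_rows)
qed

lemma identifies_stacked:
  assumes cover: "V \<subseteq> (\<Union>i<r. N i)"
    and decode: "\<And>i. i < r \<Longrightarrow> determines V k (B i) (N i)"
  shows "identifies V k (concat (map B [0..<r]))"
  unfolding identifies_def
proof (intro allI impI)
  fix x1 x2 assume x: "sparse_vec V k x1" "sparse_vec V k x2" "x1 \<noteq> x2"
  then obtain v where v: "x1 v \<noteq> x2 v" by auto
  then have "v \<in> V" using x(1,2) unfolding sparse_vec_def by metis
  then obtain i where "i < r" "v \<in> N i" using cover by blast
  then have "mat_apply (B i) x1 \<noteq> mat_apply (B i) x2"
    using decode x v(1) unfolding determines_def by blast
  moreover have "set (B i) \<subseteq> set (concat (map B [0..<r]))" using \<open>i < r\<close> by auto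
  ultimately show "mat_apply (concat (map B [0..<r])) x1 \<noteq> mat_apply (concat (map B [0..<r])) x2"
    by (auto simp: mat_apply_eq_iff)
qed

lemma length_stacked: "length (concat (map B [0..<r])) = (\<Sum>i<r. length (B i))"
  by (induction r) (simp_all add: length_concat)

theorem theorem7:
  fixes V :: "'a set" and E :: "'a set set" and k r :: nat and N :: "nat \<Rightarrow> 'a set"
  assumes "simple_graph V E"
    and "k \<ge> 1"
    and "is_r_partition V E r N"
  shows "MG V E k \<le> (\<Sum>i<r. MC k (card (N i))) + r"
proof -
  have V: "finite V" using assms(1) unfolding simple_graph_def by blast
  have cover: "(\<Union>i<r. N i) = V" and hub: "\<And>i. i < r \<Longrightarrow> is_hub E (V - N i) (N i)"
    using assms(3) unfolding is_r_partition_def by blast+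
  have "\<forall>i. \<exists>Bi. i < r \<longrightarrow>
      length Bi = MC k (card (N i)) + 1 \<and> measurement_matrix V E Bi \<and> determines V k Bi (N i)"
    using block_exists[OF V _ hub] cover by blast
  then obtain B where B: "\<And>i. i < r \<Longrightarrow> length (B i) = MC k (card (N i)) + 1"
    "\<And>i. i < r \<Longrightarrow> measurement_matrix V E (B i)" "\<And>i. i < r \<Longrightarrow> determines V k (B i) (N i)"
    by metis
  have "measurement_matrix V E (concat (map B [0..<r]))"
    using B(2) unfolding measurement_matrix_def by auto
  moreover have "identifies V k (concat (map B [0..<r]))"
    using cover by (intro identifies_stacked[OF _ B(3)]) auto
  moreover have "length (concat (map B [0..<r])) = (\<Sum>i<r. MC k (card (N i))) + r"
    using B(1) by (simp add: length_stacked sum_Suc)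
  ultimately show ?thesis using MG_le by metis
qed

end
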